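(* Let $n\ge 4$ and let $x$ be a vertex of the path $P_n$ which is not a bad vertex (i.e. it is not the case that $n=5$ and $x$ is the middle vertex of $P_5$). Then there exists a $(P_n,x)$-good path 2-placement.
   Context: $P_n$ is the path on $n$ vertices; $dist$ is distance in $P_n$, $d(y)$ the degree of $y$ in $P_n$, $N(x)$ the set of neighbors of $x$. A permutation $\sigma$ of $V(P_n)$ is a 2-placement of $P_n$ if for every edge $ab$ of $P_n$, $\sigma(a)\sigma(b)$ is not an edge of $P_n$. $P_n^k$ is the $k$-th power of $P_n$; $\sigma(P_n)\subseteq P_n^k$ means $dist(\sigma(a),\sigma(b))\le k$ for every edge $ab$ of $P_n$. A fixed-point-free permutation $\sigma$ of $V(P_n)$ is a $(P_n,x)$-good path 2-placement if: (1) $\sigma$ is a 2-placement of $P_n$; (2) $\sigma(P_n)\subseteq P_n^5$; (3) $dist(x,\sigma(x))=1$; (4) $dist(y,\sigma(y))\le 2$ for every $y\in N(x)$ and for every $y$ with $d(y)=1$. *)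

theory Defs
  imports Main
begin

definition path_verts :: "nat \<Rightarrow> nat set" where
  "path_verts n = {1..n}"

definition path_edge :: "nat \<Rightarrow> nat \<Rightarrow> nat \<Rightarrow> bool" where
  "path_edge n a b \<longleftrightarrow> a \<in> path_verts n \<and> b \<in> path_verts n \<and> (a = b + 1 \<or> b = a + 1)"

definition path_dist :: "nat \<Rightarrow> nat \<Rightarrow> nat" where
  "path_dist a b = (if a \<le> b then b - a else a - b)"

definition path_nbrs :: "nat \<Rightarrow> nat \<Rightarrow> nat set" where
  "path_nbrs n x = {y. path_edge n x y}"

definition path_deg :: "nat \<Rightarrow> nat \<Rightarrow> nat" where
  "path_deg n y = card (path_nbrs n y)"

definition is_perm_path :: "nat \<Rightarrow> (nat \<Rightarrow> nat) \<Rightarrow> bool" where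
  "is_perm_path n \<sigma> \<longleftrightarrow> bij_betw \<sigma> (path_verts n) (path_verts n)"

definition two_placement :: "nat \<Rightarrow> (nat \<Rightarrow> nat) \<Rightarrow> bool" where
  "two_placement n \<sigma> \<longleftrightarrow> is_perm_path n \<sigma> \<and>
     (\<forall>a b. path_edge n a b \<longrightarrow> \<not> path_edge n (\<sigma> a) (\<sigma> b))"

definition in_path_power :: "nat \<Rightarrow> nat \<Rightarrow> (nat \<Rightarrow> nat) \<Rightarrow> bool" where
  "in_path_power n k \<sigma> \<longleftrightarrow> (\<forall>a b. path_edge n a b \<longrightarrow> path_dist (\<sigma> a) (\<sigma> b) \<le> k)"

definition good_path_2placement :: "nat \<Rightarrow> nat \<Rightarrow> (nat \<Rightarrow> nat) \<Rightarrow> bool" where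
  "good_path_2placement n x \<sigma> \<longleftrightarrow>
     is_perm_path n \<sigma> \<and>
     (\<forall>v\<in>path_verts n. \<sigma> v \<noteq> v) \<and>
     two_placement n \<sigma> \<and>
     in_path_power n 5 \<sigma> \<and>
     path_dist x (\<sigma> x) = 1 \<and>
     (\<forall>y\<in>path_verts n. (y \<in> path_nbrs n x \<or> path_deg n y = 1) \<longrightarrow> path_dist y (\<sigma> y) \<le> 2)"

definition bad_vertex :: "nat \<Rightarrow> nat \<Rightarrow> bool" where
  "bad_vertex n x \<longleftrightarrow> n = 5 \<and> x = 3"

end

theory Submission
  imports Defs
begin

text \<open>All conditions of a good path 2-placement concern consecutive vertices, the two ends and
the neighbours of \<open>x\<close>. Appending the block \<open>n+2, n+4, n+1, n+3\<close> to a good placement of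
\<open>P\<^sub>n\<close> therefore yields one of \<open>P\<^sub>n\<^sub>+\<^sub>4\<close> with the same \<open>x\<close> (vertex \<open>n\<close> is sent to \<open>n - 1\<close>
or \<open>n - 2\<close>, at distance 3 or 4 from \<open>n + 2\<close>), and conjugating by the reversal of
the path puts the block in front instead, turning \<open>x\<close> into \<open>x + 4\<close>. Induction reduces
everything to \<open>4 \<le> n \<le> 7\<close> and to \<open>n = 9\<close>, \<open>x \<in> {3, 7}\<close>, where the reduction would hit the
bad vertex of \<open>P\<^sub>5\<close>; these finitely many cases are checked by evaluation.\<close>

lemma path_dist_commute: "path_dist a b = path_dist b a"
  by (simp add: path_dist_def)

lemma path_dist_eq_0_iff: "path_dist a b = 0 \<longleftrightarrow> a = b"
  by (auto simp: path_dist_def)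

lemma path_edge_imp_path_dist: "path_edge n a b \<Longrightarrow> path_dist a b = 1"
  by (auto simp: path_edge_def path_dist_def)

lemma path_edgeE:
  assumes "path_edge n a b"
  obtains i where "i \<in> {1..<n}" "a = i \<and> b = Suc i \<or> a = Suc i \<and> b = i"
proof -
  have "a \<in> {1..n}" "b \<in> {1..n}" "a = b + 1 \<or> b = a + 1"
    using assms by (auto simp: path_edge_def path_verts_def)
  then show thesis
    using that[of a] that[of b] by auto
qed

lemma path_nbrs_subset: "path_nbrs n x \<subseteq> {x - 1, x + 1}"
  by (auto simp: path_nbrs_def path_edge_def)

lemma path_deg_interior:
  assumes "1 < y" "y < n"
  shows "path_deg n y = 2"
proof -
  have "path_nbrs n y = {y - 1, y + 1}"
    using assms by (auto simp: path_nbrs_def path_edge_def path_verts_def)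
  then show ?thesis
    using assms by (simp add: path_deg_def)
qed

definition local_good_placement :: "nat \<Rightarrow> nat \<Rightarrow> (nat \<Rightarrow> nat) \<Rightarrow> bool" where
  "local_good_placement n x \<sigma> \<longleftrightarrow>
     bij_betw \<sigma> {1..n} {1..n} \<and> (\<forall>i\<in>{1..n}. \<sigma> i \<noteq> i) \<and>
     (\<forall>i\<in>{1..<n}. path_dist (\<sigma> i) (\<sigma> (Suc i)) \<in> {2..5}) \<and>
     path_dist x (\<sigma> x) = 1 \<and>
     path_dist 1 (\<sigma> 1) \<le> 2 \<and> path_dist n (\<sigma> n) \<le> 2 \<and>
     (1 < x \<longrightarrow> path_dist (x - 1) (\<sigma> (x - 1)) \<le> 2) \<and>
     (x < n \<longrightarrow> path_dist (x + 1) (\<sigma> (x + 1)) \<le> 2)"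

lemma local_good_placementD:
  assumes "local_good_placement n x \<sigma>"
  shows "bij_betw \<sigma> {1..n} {1..n}"
    and "\<And>i. i \<in> {1..n} \<Longrightarrow> \<sigma> i \<noteq> i"
    and "\<And>i. i \<in> {1..<n} \<Longrightarrow> path_dist (\<sigma> i) (\<sigma> (Suc i)) \<in> {2..5}"
    and "path_dist x (\<sigma> x) = 1"
    and "path_dist 1 (\<sigma> 1) \<le> 2" and "path_dist n (\<sigma> n) \<le> 2"
    and "1 < x \<Longrightarrow> path_dist (x - 1) (\<sigma> (x - 1)) \<le> 2"
    and "x < n \<Longrightarrow> path_dist (x + 1) (\<sigma> (x + 1)) \<le> 2"
  using assms unfolding local_good_placement_def by blast+

lemma good_path_2placement_if_local:
  assumes "local_good_placement n x \<sigma>"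
  shows "good_path_2placement n x \<sigma>"
proof -
  note \<sigma> = local_good_placementD[OF assms]
  have perm: "is_perm_path n \<sigma>"
    using \<sigma>(1) by (simp add: is_perm_path_def path_verts_def)
  have edge_dist: "path_dist (\<sigma> a) (\<sigma> b) \<in> {2..5}" if "path_edge n a b" for a b
    using that
  proof (cases rule: path_edgeE)
    case (1 i)
    then show ?thesis
      using \<sigma>(3)[of i] path_dist_commute by auto
  qed
  have "two_placement n \<sigma>"
    unfolding two_placement_def using perm edge_dist path_edge_imp_path_dist by fastforce
  moreover have "in_path_power n 5 \<sigma>"
    unfolding in_path_power_def using edge_dist by auto
  moreover have "path_dist y (\<sigma> y) \<le> 2"
    if "y \<in> path_verts n" "y \<in> path_nbrs n x \<or> path_deg n y = 1" for y
  proof -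
    have "y \<in> {1, n, x - 1, x + 1}"
      using that path_nbrs_subset[of n x] path_deg_interior[of y n]
      by (force simp: path_verts_def)
    then show ?thesis
      using \<sigma>(5-8) that(1) by (auto simp: path_verts_def)
  qed
  ultimately show ?thesis
    unfolding good_path_2placement_def using perm \<sigma>(2,4) by (simp add: path_verts_def)
qed

lemma local_good_placement_last:
  assumes "local_good_placement n x \<sigma>" "1 \<le> n"
  shows "n - 2 \<le> \<sigma> n" "\<sigma> n < n"
proof -
  note \<sigma> = local_good_placementD[OF assms(1)]
  have "\<sigma> n \<in> {1..n}" "\<sigma> n \<noteq> n"
    using assms(2) bij_betw_apply[OF \<sigma>(1)] \<sigma>(2) by auto
  then show "n - 2 \<le> \<sigma> n" "\<sigma> n < n"
    using \<sigma>(6) by (auto simp: path_dist_def split: if_splits)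
qed

definition path_reflect :: "nat \<Rightarrow> nat \<Rightarrow> nat" where
  "path_reflect n i = n + 1 - i"

definition reflect_placement :: "nat \<Rightarrow> (nat \<Rightarrow> nat) \<Rightarrow> nat \<Rightarrow> nat" where
  "reflect_placement n \<sigma> = path_reflect n \<circ> \<sigma> \<circ> path_reflect n"

lemma path_reflect_path_reflect: "i \<le> n \<Longrightarrow> path_reflect n (path_reflect n i) = i"
  by (simp add: path_reflect_def)

lemma path_reflect_mem: "i \<in> {1..n} \<Longrightarrow> path_reflect n i \<in> {1..n}"
  by (auto simp: path_reflect_def)

lemma bij_betw_path_reflect: "bij_betw (path_reflect n) {1..n} {1..n}"
  by (rule bij_betw_byWitness[where f' = "path_reflect n"])
    (auto simp: path_reflect_def)

lemma path_dist_path_reflect: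
  "a \<le> n \<Longrightarrow> b \<le> n \<Longrightarrow> path_dist (path_reflect n a) (path_reflect n b) = path_dist a b"
  by (auto simp: path_dist_def path_reflect_def)

lemma local_good_placement_reflect:
  assumes "local_good_placement n x \<sigma>" "x \<in> {1..n}"
  shows "local_good_placement n (path_reflect n x) (reflect_placement n \<sigma>)"
proof -
  note \<sigma> = local_good_placementD[OF assms(1)]
  let ?r = "path_reflect n" and ?\<rho> = "reflect_placement n \<sigma>"
  have \<sigma>_mem: "\<sigma> i \<in> {1..n}" if "i \<in> {1..n}" for i
    using bij_betw_apply[OF \<sigma>(1) that] .
  have dist_\<rho>: "path_dist (?r a) (?\<rho> b) = path_dist a (\<sigma> (?r b))"
    if "a \<le> n" "b \<in> {1..n}" for a b
    using path_dist_path_reflect[of a n "\<sigma> (?r b)"] \<sigma>_mem[OF path_reflect_mem[OF that(2)]] that(1)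
    by (simp add: reflect_placement_def)
  have displacement: "path_dist i (?\<rho> i) = path_dist (?r i) (\<sigma> (?r i))" if "i \<in> {1..n}" for i
    using dist_\<rho>[of "?r i" i] that path_reflect_path_reflect[of i n] by (auto simp: path_reflect_def)
  have "bij_betw ?\<rho> {1..n} {1..n}"
    unfolding reflect_placement_def comp_assoc
    using bij_betw_trans[OF bij_betw_trans[OF bij_betw_path_reflect \<sigma>(1)] bij_betw_path_reflect] .
  moreover have "?\<rho> i \<noteq> i" if "i \<in> {1..n}" for i
    using displacement[OF that] \<sigma>(2)[OF path_reflect_mem[OF that]] path_dist_eq_0_iff by metis
  moreover have "path_dist (?\<rho> i) (?\<rho> (Suc i)) \<in> {2..5}" if "i \<in> {1..<n}" for i
  proof -
    define j where "j = ?r (Suc i)"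
    have j: "j \<in> {1..<n}" "?r i = Suc j"
      using that by (auto simp: j_def path_reflect_def)
    have "path_dist (?\<rho> i) (?\<rho> (Suc i)) = path_dist (\<sigma> (Suc j)) (\<sigma> j)"
      using \<sigma>_mem[of j] \<sigma>_mem[of "Suc j"] j
      by (simp add: reflect_placement_def j_def path_dist_path_reflect)
    then show ?thesis
      using \<sigma>(3)[OF j(1)] path_dist_commute by simp
  qed
  ultimately show ?thesis
    unfolding local_good_placement_def
    using assms(2) \<sigma>(4-8) displacement[of 1] displacement[of n] displacement[of "?r x"]
      displacement[of "?r x - 1"] displacement[of "?r x + 1"]
    by (auto simp: path_reflect_def Suc_diff_le)
qed

definition one_line :: "nat list \<Rightarrow> nat \<Rightarrow> nat" where
  "one_line l i = l ! (i - 1)"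

definition extend_placement :: "nat \<Rightarrow> (nat \<Rightarrow> nat) \<Rightarrow> nat \<Rightarrow> nat" where
  "extend_placement n \<sigma> i = (if i \<le> n then \<sigma> i else one_line [n + 2, n + 4, n + 1, n + 3] (i - n))"

lemma extend_placement_low: "i \<le> n \<Longrightarrow> extend_placement n \<sigma> i = \<sigma> i"
  by (simp add: extend_placement_def)

lemma extend_placement_high:
  "extend_placement n \<sigma> (n + 1) = n + 2" "extend_placement n \<sigma> (n + 2) = n + 4"
  "extend_placement n \<sigma> (n + 3) = n + 1" "extend_placement n \<sigma> (n + 4) = n + 3"
  by (simp_all add: extend_placement_def one_line_def)

lemma bij_betw_extend_placement:
  assumes "bij_betw \<sigma> {1..n} {1..n}"
  shows "bij_betw (extend_placement n \<sigma>) {1..n + 4} {1..n + 4}"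
proof -
  have "bij_betw (extend_placement n \<sigma>) {1..n} {1..n}"
    using assms by (rule bij_betw_cong[THEN iffD2, rotated]) (simp add: extend_placement_low)
  moreover have "bij_betw (extend_placement n \<sigma>) {n + 1..n + 4} {n + 1..n + 4}"
  proof -
    have "{n + 1..n + 4} = {n + 1, n + 2, n + 3, n + 4}"
      by auto
    then show ?thesis
      unfolding bij_betw_def by (auto simp: extend_placement_def one_line_def)
  qed
  ultimately have "bij_betw (extend_placement n \<sigma>) ({1..n} \<union> {n + 1..n + 4}) ({1..n} \<union> {n + 1..n + 4})"
    by (rule bij_betw_combine) auto
  moreover have "{1..n} \<union> {n + 1..n + 4} = {1..n + 4}"
    by auto
  ultimately show ?thesis
    by simp
qed

lemma local_good_placement_extend:
  assumes "local_good_placement n x \<sigma>" "x \<in> {1..n}"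
  shows "local_good_placement (n + 4) x (extend_placement n \<sigma>)"
proof -
  note \<sigma> = local_good_placementD[OF assms(1)]
  let ?\<tau> = "extend_placement n \<sigma>"
  note low = extend_placement_low[of _ n \<sigma>] and high = extend_placement_high[of n \<sigma>]
  have last: "n - 2 \<le> \<sigma> n" "\<sigma> n < n"
    using local_good_placement_last[OF assms(1)] assms(2) by auto
  have "path_dist (?\<tau> i) (?\<tau> (Suc i)) \<in> {2..5}" if "i \<in> {1..<n + 4}" for i
  proof -
    have "i < n \<or> i = n \<or> i = n + 1 \<or> i = n + 2 \<or> i = n + 3"
      using that by auto
    then consider "i < n" | "i = n" | "i = n + 1" | "i = n + 2" | "i = n + 3"
      by blast
    then show ?thesis
    proof cases
      case 1
      then show ?thesis
        using \<sigma>(3)[of i] that by (simp add: low)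
    next
      case 2
      then show ?thesis
        using last high(1) by (simp add: low path_dist_def, arith)
    qed (simp_all add: extend_placement_def one_line_def path_dist_def)
  qed
  moreover have "?\<tau> i \<noteq> i" if "i \<in> {1..n + 4}" for i
  proof -
    have "i \<le> n \<or> i = n + 1 \<or> i = n + 2 \<or> i = n + 3 \<or> i = n + 4"
      using that by auto
    then show ?thesis
      using that \<sigma>(2) by (auto simp: extend_placement_def one_line_def)
  qed
  moreover have "path_dist (x + 1) (?\<tau> (x + 1)) \<le> 2"
    using \<sigma>(8) high(1) assms(2) by (cases "x < n") (auto simp: low path_dist_def)
  moreover have "path_dist (n + 4) (?\<tau> (n + 4)) \<le> 2"
    using high(4) by (simp add: path_dist_def)
  moreover have "1 < x \<Longrightarrow> path_dist (x - 1) (?\<tau> (x - 1)) \<le> 2"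
    using \<sigma>(7) assms(2) by (simp add: low)
  ultimately show ?thesis
    unfolding local_good_placement_def
    using bij_betw_extend_placement[OF \<sigma>(1)] \<sigma>(4,5) assms(2) low[of x] low[of 1] by auto
qed

definition small_placements :: "((nat \<times> nat) \<times> nat list) list" where
  "small_placements =
    [((4, 1), [2, 4, 1, 3]), ((4, 2), [3, 1, 4, 2]), ((4, 3), [3, 1, 4, 2]), ((4, 4), [2, 4, 1, 3]),
     ((5, 1), [2, 4, 1, 5, 3]), ((5, 2), [3, 1, 5, 2, 4]), ((5, 4), [2, 4, 1, 5, 3]),
     ((5, 5), [3, 1, 5, 2, 4]),
     ((6, 1), [2, 4, 1, 6, 3, 5]), ((6, 2), [3, 1, 4, 6, 2, 5]), ((6, 3), [3, 1, 4, 6, 2, 5]),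
     ((6, 4), [2, 5, 1, 3, 6, 4]), ((6, 5), [2, 5, 1, 3, 6, 4]), ((6, 6), [2, 4, 1, 6, 3, 5]),
     ((7, 1), [2, 4, 1, 5, 7, 3, 6]), ((7, 2), [3, 1, 4, 6, 2, 7, 5]),
     ((7, 3), [3, 1, 4, 6, 2, 7, 5]), ((7, 4), [2, 4, 1, 5, 7, 3, 6]),
     ((7, 5), [3, 1, 6, 2, 4, 7, 5]), ((7, 6), [2, 4, 1, 6, 3, 7, 5]),
     ((7, 7), [2, 5, 1, 3, 7, 4, 6]),
     ((9, 3), [3, 1, 4, 2, 6, 8, 5, 9, 7]), ((9, 7), [2, 4, 1, 5, 3, 8, 6, 9, 7])]"

lemma small_placements_good:
  "\<forall>((n, x), l) \<in> set small_placements. local_good_placement n x (one_line l)"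
  by code_simp

lemma small_placements_complete:
  "\<forall>n\<in>{4..7}. \<forall>x\<in>{1..n}. \<not> bad_vertex n x \<longrightarrow> (n, x) \<in> fst ` set small_placements"
  "(9, 3) \<in> fst ` set small_placements" "(9, 7) \<in> fst ` set small_placements"
  by code_simp+

lemma local_good_placement_shift:
  assumes "local_good_placement n x \<sigma>" "x \<in> {1..n}"
  shows "local_good_placement (n + 4) (x + 4)
    (reflect_placement (n + 4) (extend_placement n (reflect_placement n \<sigma>)))"
proof -
  have x': "path_reflect n x \<in> {1..n}"
    using assms(2) by (rule path_reflect_mem)
  have "local_good_placement (n + 4) (path_reflect n x) (extend_placement n (reflect_placement n \<sigma>))"
    using local_good_placement_reflect[OF assms] x' by (rule local_good_placement_extend)
  moreover have "path_reflect (n + 4) (path_reflect n x) = x + 4"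
    using assms(2) by (simp add: path_reflect_def)
  ultimately show ?thesis
    using local_good_placement_reflect[of "n + 4" "path_reflect n x"] x' by fastforce
qed

lemma local_good_placement_exists:
  assumes "4 \<le> n" "x \<in> {1..n}" "\<not> bad_vertex n x"
  shows "\<exists>\<sigma>. local_good_placement n x \<sigma>"
  using assms
proof (induction n arbitrary: x rule: less_induct)
  case (less n)
  consider "n \<le> 7 \<or> n = 9 \<and> x \<in> {3, 7}"
    | "8 \<le> n" "x \<le> n - 4" "\<not> bad_vertex (n - 4) x"
    | "8 \<le> n" "n - 4 < x" "\<not> bad_vertex (n - 4) (x - 4)"
    using less.prems by (fastforce simp: bad_vertex_def)
  then show ?case
  proof cases
    case 1
    then have "(n, x) \<in> fst ` set small_placements"
      using small_placements_complete less.prems by auto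
    then obtain l where "((n, x), l) \<in> set small_placements"
      by force
    then show ?thesis
      using small_placements_good by fast
  next
    case 2
    have "\<exists>\<sigma>. local_good_placement (n - 4) x \<sigma>"
      using 2 less.prems by (intro less.IH) auto
    then obtain \<sigma> where "local_good_placement (n - 4) x \<sigma>" ..
    then have "local_good_placement (n - 4 + 4) x (extend_placement (n - 4) \<sigma>)"
      using 2 less.prems by (intro local_good_placement_extend) auto
    then show ?thesis
      using 2 by auto
  next
    case 3
    have "\<exists>\<sigma>. local_good_placement (n - 4) (x - 4) \<sigma>"
      using 3 less.prems by (intro less.IH) auto
    then obtain \<sigma> where "local_good_placement (n - 4) (x - 4) \<sigma>" ..
    moreover have "x - 4 \<in> {1..n - 4}" "n - 4 + 4 = n" "x - 4 + 4 = x"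
      using 3 less.prems by auto
    ultimately show ?thesis
      using local_good_placement_shift by metis
  qed
qed

theorem theorem3p2:
  fixes n x :: nat
  assumes "n \<ge> 4" and "x \<in> path_verts n" and "\<not> bad_vertex n x"
  shows "\<exists>\<sigma>. good_path_2placement n x \<sigma>"
proof -
  obtain \<sigma> where "local_good_placement n x \<sigma>"
    using local_good_placement_exists assms by (auto simp: path_verts_def)
  then show ?thesis
    by (blast intro: good_path_2placement_if_local)
qed

end
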